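(* Let $e_1,e_2$ be forward events in a pre-reversible LTSI satisfying IRE and RPI. Then $e_1\prec e_2$ if and only if $e_1$ is composable with $e_2$ and not $e_1\odot e_2$.
   Context: A combined LTS consists of a set $\mathsf{Proc}$ of processes, a set $\mathsf{Lab}$ of labels, a forward relation $P\xrightarrow{a}Q$ and a backward relation $P\rightsquigarrow^{a}Q$ with $P\xrightarrow aQ$ iff $Q\rightsquigarrow^aP$. A transition is a forward or backward step $t$; its inverse $\bar t$ is the same step in the opposite direction (forward becomes backward with the same label and vice versa). Transitions are coinitial if they share a source, composable if the target of the first is the source of the second. A path is a finite sequence of composable transitions; it is rooted if its source cannot perform any backward transition. An LTSI is a combined LTS together with an irreflexive symmetric relation $\iota$ on transitions. Axioms: (SP) if $t:P\to Q$ and $u:P\to R$ are coinitial with $t\mathrel\iota u$, then there are $u':Q\to S$ with the same label and direction as $u$ and $t':R\to S$ with the same label and direction as $t$; (BTI) any two distinct coinitial backward transitions are independent; (WF) there is no infinite sequence of processes $P_0,P_1,\dots$ with a forward transition $P_{i+1}\to P_i$ for all $i$; (PCI) if $t:P\to Q$, $u:P\to R$, $u':Q\to S$, $t':R\to S$ where $u'$ has the label and direction of $u$ and $t'$ those of $t$, and $t\mathrel\iota u$, then $u'\mathrel\iota\bar t$. An LTSI is pre-reversible if it satisfies SP, BTI, WF and PCI. Event equivalence $\sim$ is the smallest equivalence relation on transitions such that whenever $t,u,u',t'$ form a square as in PCI with $t\mathrel\iota u$, then $t\sim t'$. Events are $\sim$-classes $[t]$; an event is forward if it is the class of a forward transition,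 and $\bar e=[\bar t]$ for $e=[t]$. (IRE) if $t\sim t'$ and $t'\mathrel\iota u$ then $t\mathrel\iota u$. (RPI) if $t\mathrel\iota t'$ then $\bar t\mathrel\iota t'$. For a path $r$ and event $e$: $\sharp(\varepsilon,e)=0$ and $\sharp(tr,e)=\sharp(r,e)+1$ if $t\in e$, $\sharp(r,e)-1$ if $t\in\bar e$, $\sharp(r,e)$ otherwise. Core independence: $e\odot e'$ iff there are coinitial $t\in e$, $t'\in e'$ with $t\mathrel\iota t'$. For forward events: $e\le e'$ iff for every rooted path $r$, $\sharp(r,e')>0$ implies $\sharp(r,e)>0$; $e<e'$ iff $e\le e'$ and $e\ne e'$; $e_1\prec e_2$ (immediate predecessor) iff $e_1<e_2$ and there is no event $e$ with $e_1<e<e_2$. Events $e_1,e_2$ are composable if there are $t_1\in e_1$, $t_2\in e_2$ with $t_1$ composable with $t_2$. *)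

theory Defs
  imports Main
begin

text \<open>A combined LTS is given by its forward relation \<open>fwd P a Q\<close> (P --a--> Q);
  the backward relation is its converse: P ~~a~~> Q iff Q --a--> P.
  A transition records source, label, direction (True = forward) and target.\<close>

datatype ('p, 'l) trans = Tr (src: 'p) (lbl: 'l) (fw: bool) (tgt: 'p)

definition valid_tr :: "('p \<Rightarrow> 'l \<Rightarrow> 'p \<Rightarrow> bool) \<Rightarrow> ('p, 'l) trans \<Rightarrow> bool" where
  "valid_tr fwd t \<longleftrightarrow>
     (if fw t then fwd (src t) (lbl t) (tgt t) else fwd (tgt t) (lbl t) (src t))"

definition inv_tr :: "('p, 'l) trans \<Rightarrow> ('p, 'l) trans" where
  "inv_tr t = Tr (tgt t) (lbl t) (\<not> fw t) (src t)"

definition square :: "('p \<Rightarrow> 'l \<Rightarrow> 'p \<Rightarrow> bool) \<Rightarrow> ('p, 'l) trans \<Rightarrow> ('p, 'l) trans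
    \<Rightarrow> ('p, 'l) trans \<Rightarrow> ('p, 'l) trans \<Rightarrow> bool" where
  "square fwd t u u' t' \<longleftrightarrow>
     valid_tr fwd t \<and> valid_tr fwd u \<and> valid_tr fwd u' \<and> valid_tr fwd t' \<and>
     src t = src u \<and> src u' = tgt t \<and> src t' = tgt u \<and> tgt u' = tgt t' \<and>
     lbl u' = lbl u \<and> fw u' = fw u \<and> lbl t' = lbl t \<and> fw t' = fw t"

definition LTSI :: "('p \<Rightarrow> 'l \<Rightarrow> 'p \<Rightarrow> bool) \<Rightarrow> (('p,'l) trans \<Rightarrow> ('p,'l) trans \<Rightarrow> bool) \<Rightarrow> bool" where
  "LTSI fwd iota \<longleftrightarrow>
     (\<forall>t u. iota t u \<longrightarrow> valid_tr fwd t \<and> valid_tr fwd u) \<and>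
     (\<forall>t. \<not> iota t t) \<and> (\<forall>t u. iota t u \<longrightarrow> iota u t)"

definition SP where
  "SP fwd iota \<longleftrightarrow> (\<forall>t u. valid_tr fwd t \<and> valid_tr fwd u \<and> src t = src u \<and> iota t u \<longrightarrow>
     (\<exists>u' t'. square fwd t u u' t'))"

definition BTI where
  "BTI fwd iota \<longleftrightarrow> (\<forall>t u. valid_tr fwd t \<and> valid_tr fwd u \<and> \<not> fw t \<and> \<not> fw u \<and>
     src t = src u \<and> t \<noteq> u \<longrightarrow> iota t u)"

definition WF :: "('p \<Rightarrow> 'l \<Rightarrow> 'p \<Rightarrow> bool) \<Rightarrow> bool" where
  "WF fwd \<longleftrightarrow> \<not> (\<exists>P :: nat \<Rightarrow> 'p. \<forall>i. \<exists>a. fwd (P (Suc i)) a (P i))"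

definition PCI where
  "PCI fwd iota \<longleftrightarrow> (\<forall>t u u' t'. square fwd t u u' t' \<and> iota t u \<longrightarrow> iota u' (inv_tr t))"

definition pre_reversible where
  "pre_reversible fwd iota \<longleftrightarrow> LTSI fwd iota \<and> SP fwd iota \<and> BTI fwd iota \<and> WF fwd \<and> PCI fwd iota"

inductive ev_eq :: "('p \<Rightarrow> 'l \<Rightarrow> 'p \<Rightarrow> bool) \<Rightarrow> (('p,'l) trans \<Rightarrow> ('p,'l) trans \<Rightarrow> bool)
    \<Rightarrow> ('p,'l) trans \<Rightarrow> ('p,'l) trans \<Rightarrow> bool"
  for fwd iota where
  ev_refl: "valid_tr fwd t \<Longrightarrow> ev_eq fwd iota t t"
| ev_sym: "ev_eq fwd iota t u \<Longrightarrow> ev_eq fwd iota u t"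
| ev_trans: "ev_eq fwd iota t u \<Longrightarrow> ev_eq fwd iota u v \<Longrightarrow> ev_eq fwd iota t v"
| ev_square: "square fwd t u u' t' \<Longrightarrow> iota t u \<Longrightarrow> ev_eq fwd iota t t'"

definition ev_class where
  "ev_class fwd iota t = {u. ev_eq fwd iota t u}"

definition is_event where
  "is_event fwd iota e \<longleftrightarrow> (\<exists>t. valid_tr fwd t \<and> e = ev_class fwd iota t)"

definition forward_event where
  "forward_event fwd iota e \<longleftrightarrow> (\<exists>t. valid_tr fwd t \<and> fw t \<and> e = ev_class fwd iota t)"

definition ev_bar :: "('p,'l) trans set \<Rightarrow> ('p,'l) trans set" where
  "ev_bar e = inv_tr ` e"

definition IRE where
  "IRE fwd iota \<longleftrightarrow> (\<forall>t t' u. ev_eq fwd iota t t' \<and> iota t' u \<longrightarrow> iota t u)"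

definition RPI where
  "RPI (iota :: ('p,'l) trans \<Rightarrow> ('p,'l) trans \<Rightarrow> bool) \<longleftrightarrow>
     (\<forall>t t'. iota t t' \<longrightarrow> iota (inv_tr t) t')"

fun is_path :: "('p \<Rightarrow> 'l \<Rightarrow> 'p \<Rightarrow> bool) \<Rightarrow> ('p,'l) trans list \<Rightarrow> bool" where
  "is_path fwd [] = True"
| "is_path fwd [t] = valid_tr fwd t"
| "is_path fwd (t # u # r) = (valid_tr fwd t \<and> tgt t = src u \<and> is_path fwd (u # r))"

definition rooted_path where
  "rooted_path fwd r \<longleftrightarrow> is_path fwd r \<and>
     (r \<noteq> [] \<longrightarrow> \<not> (\<exists>a Q. fwd Q a (src (hd r))))"

fun count_ev :: "('p,'l) trans list \<Rightarrow> ('p,'l) trans set \<Rightarrow> int" where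
  "count_ev [] e = 0"
| "count_ev (t # r) e = count_ev r e +
     (if t \<in> e then 1 else if t \<in> ev_bar e then -1 else 0)"

definition core_indep where
  "core_indep iota e e' \<longleftrightarrow> (\<exists>t\<in>e. \<exists>t'\<in>e'. src t = src t' \<and> iota t t')"

definition ev_le where
  "ev_le fwd e e' \<longleftrightarrow> (\<forall>r. rooted_path fwd r \<longrightarrow> count_ev r e' > 0 \<longrightarrow> count_ev r e > 0)"

definition ev_less where
  "ev_less fwd e e' \<longleftrightarrow> ev_le fwd e e' \<and> e \<noteq> e'"

definition ev_prec where
  "ev_prec fwd iota e1 e2 \<longleftrightarrow> ev_less fwd e1 e2 \<and>
     \<not> (\<exists>e. forward_event fwd iota e \<and> ev_less fwd e1 e \<and> ev_less fwd e e2)"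

definition ev_composable where
  "ev_composable e1 e2 \<longleftrightarrow> (\<exists>t1\<in>e1. \<exists>t2\<in>e2. tgt t1 = src t2)"

end

theory Submission
  imports Defs "HOL-Library.Multiset"
begin

text \<open>By WF every process X has backward paths to a root, and by BTI and SP any two of
  them can be closed into squares, which (being squares of independent transitions)
  undo the same events. So X determines the multiset \<open>history X\<close> of forward events
  undone on the way back to a root, and the count of e along a rooted path ending in X
  is the multiplicity of e in \<open>history X\<close>. Hence \<open>e \<le> e'\<close> means that every history
  containing e' contains e. IRE and RPI make histories sets. If t1 t2 are composable
  forward transitions with \<open>inv t1\<close> and t2 not independent then \<open>[t1] \<le> [t2]\<close>; conversely,
  descending from a transition of e2 through the backward steps of its source, one either
  meets a transition of e1 composable with it, or an event strictly between e1 and e2.\<close>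

lemma inv_tr_inv_tr [simp]: "inv_tr (inv_tr t) = t"
  by (cases t) (simp add: inv_tr_def)

lemma inv_tr_sel [simp]:
  "src (inv_tr t) = tgt t" "tgt (inv_tr t) = src t" "lbl (inv_tr t) = lbl t"
  "fw (inv_tr t) = (\<not> fw t)"
  by (simp_all add: inv_tr_def)

lemma valid_tr_inv_tr [simp]: "valid_tr fwd (inv_tr t) = valid_tr fwd t"
  by (simp add: valid_tr_def inv_tr_def)

lemma mem_ev_bar_iff: "t \<in> ev_bar e \<longleftrightarrow> inv_tr t \<in> e"
  unfolding ev_bar_def by (metis image_iff inv_tr_inv_tr)

lemma square_swap: "square fwd t u u' t' \<Longrightarrow> square fwd u t t' u'"
  by (auto simp: square_def)

lemma is_path_snoc:
  "is_path fwd r \<Longrightarrow> r \<noteq> [] \<Longrightarrow> tgt (last r) = src t \<Longrightarrow> valid_tr fwd t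
    \<Longrightarrow> is_path fwd (r @ [t])"
proof (induction r)
  case (Cons x r)
  then show ?case by (cases r) auto
qed simp

locale pre_reversible_ltsi =
  fixes fwd :: "'p \<Rightarrow> 'l \<Rightarrow> 'p \<Rightarrow> bool"
    and iota :: "('p,'l) trans \<Rightarrow> ('p,'l) trans \<Rightarrow> bool"
  assumes pre_reversible: "pre_reversible fwd iota"
begin

lemma iota_sym: "iota t u \<Longrightarrow> iota u t"
  using pre_reversible by (auto simp: pre_reversible_def LTSI_def)

lemma iota_irrefl: "\<not> iota t t"
  using pre_reversible by (auto simp: pre_reversible_def LTSI_def)

lemma iota_valid: "iota t u \<Longrightarrow> valid_tr fwd t \<and> valid_tr fwd u"
  using pre_reversible by (auto simp: pre_reversible_def LTSI_def)

lemma square_exists: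
  "valid_tr fwd t \<Longrightarrow> valid_tr fwd u \<Longrightarrow> src t = src u \<Longrightarrow> iota t u
    \<Longrightarrow> \<exists>u' t'. square fwd t u u' t'"
  using pre_reversible by (auto simp: pre_reversible_def SP_def)

lemma backward_iota:
  "valid_tr fwd t \<Longrightarrow> valid_tr fwd u \<Longrightarrow> \<not> fw t \<Longrightarrow> \<not> fw u \<Longrightarrow> src t = src u
    \<Longrightarrow> t \<noteq> u \<Longrightarrow> iota t u"
  using pre_reversible by (auto simp: pre_reversible_def BTI_def)

lemma square_iota_inv_tr: "square fwd t u u' t' \<Longrightarrow> iota t u \<Longrightarrow> iota u' (inv_tr t)"
  using pre_reversible by (auto simp: pre_reversible_def PCI_def)

lemma back_step_induct [case_names step]:
  assumes "\<And>P. (\<And>Q a. fwd Q a P \<Longrightarrow> R Q) \<Longrightarrow> R P"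
  shows "R P"
proof -
  have "wf {(Q, P). \<exists>a. fwd Q a P}"
    using pre_reversible unfolding pre_reversible_def WF_def wf_iff_no_infinite_down_chain
    by auto
  then show ?thesis using assms by (induction P rule: wf_induct_rule) blast
qed

lemma ev_eq_valid: "ev_eq fwd iota t u \<Longrightarrow> valid_tr fwd t \<and> valid_tr fwd u"
  by (induction rule: ev_eq.induct) (auto simp: square_def)

lemma ev_eq_fw: "ev_eq fwd iota t u \<Longrightarrow> fw t = fw u"
  by (induction rule: ev_eq.induct) (auto simp: square_def)

lemma square_ev_eq: "square fwd t u u' t' \<Longrightarrow> iota t u \<Longrightarrow> ev_eq fwd iota t t'"
  by (rule ev_eq.ev_square)

lemma square_ev_eq_swap: "square fwd t u u' t' \<Longrightarrow> iota t u \<Longrightarrow> ev_eq fwd iota u u'"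
  using square_swap iota_sym square_ev_eq by blast

lemma ev_eq_inv_tr: "ev_eq fwd iota t u \<Longrightarrow> ev_eq fwd iota (inv_tr t) (inv_tr u)"
proof (induction rule: ev_eq.induct)
  case (ev_square t u u' t')
  have "square fwd (inv_tr t) u' u (inv_tr t')"
    using ev_square(1) by (auto simp: square_def)
  then show ?case
    using iota_sym[OF square_iota_inv_tr[OF ev_square]] by (rule square_ev_eq)
qed (auto intro: ev_eq.intros)

lemma ev_class_eq: "ev_eq fwd iota t u \<Longrightarrow> ev_class fwd iota t = ev_class fwd iota u"
  unfolding ev_class_def by (blast intro: ev_eq.ev_sym ev_eq.ev_trans)

lemma ev_class_eqD:
  "ev_class fwd iota t = ev_class fwd iota u \<Longrightarrow> valid_tr fwd u \<Longrightarrow> ev_eq fwd iota t u"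
  by (auto simp: ev_class_def intro: ev_eq.ev_refl)

definition forward_tr :: "('p,'l) trans \<Rightarrow> ('p,'l) trans" where
  "forward_tr t = (if fw t then t else inv_tr t)"

definition event_of :: "('p,'l) trans \<Rightarrow> ('p,'l) trans set" where
  "event_of t = ev_class fwd iota (forward_tr t)"

lemma forward_tr_inv_tr [simp]: "forward_tr (inv_tr t) = forward_tr t"
  by (simp add: forward_tr_def)

lemma valid_forward_tr [simp]: "valid_tr fwd (forward_tr t) = valid_tr fwd t"
  by (simp add: forward_tr_def)

lemma fw_forward_tr [simp]: "fw (forward_tr t)"
  by (simp add: forward_tr_def)

lemma event_of_inv_tr [simp]: "event_of (inv_tr t) = event_of t"
  by (simp add: event_of_def)

lemma event_of_forward_tr [simp]: "event_of (forward_tr t) = event_of t"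
  by (simp add: event_of_def forward_tr_def)

lemma event_of_backward: "event_of (Tr P a False Q) = event_of (Tr Q a True P)"
  by (simp add: event_of_def forward_tr_def inv_tr_def)

lemma event_of_ev_eq: "ev_eq fwd iota t u \<Longrightarrow> event_of t = event_of u"
  using ev_eq_fw[of t u] ev_class_eq ev_eq_inv_tr by (auto simp: event_of_def forward_tr_def)

lemma event_of_eqD:
  "event_of t = event_of u \<Longrightarrow> fw t \<Longrightarrow> fw u \<Longrightarrow> valid_tr fwd u \<Longrightarrow> ev_eq fwd iota t u"
  using ev_class_eqD by (simp add: event_of_def forward_tr_def)

lemma mem_event_of: "valid_tr fwd t \<Longrightarrow> fw t \<Longrightarrow> t \<in> event_of t"
  by (simp add: event_of_def forward_tr_def ev_class_def ev_eq.ev_refl)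

lemma forward_event_event_of: "valid_tr fwd t \<Longrightarrow> forward_event fwd iota (event_of t)"
  unfolding forward_event_def event_of_def by (rule exI[of _ "forward_tr t"]) simp

lemma forward_eventE:
  assumes "forward_event fwd iota e"
  obtains s where "valid_tr fwd s" "fw s" "event_of s = e"
  using assms by (auto simp: forward_event_def event_of_def forward_tr_def)

lemma forward_event_memD:
  assumes "forward_event fwd iota e" and "t \<in> e"
  shows "valid_tr fwd t \<and> fw t \<and> event_of t = e"
proof -
  obtain s where s: "valid_tr fwd s" "fw s" "e = ev_class fwd iota s"
    using assms(1) by (auto simp: forward_event_def)
  then have st: "ev_eq fwd iota s t"
    using assms(2) by (simp add: ev_class_def)
  then show ?thesis
    using ev_eq_valid ev_eq_fw event_of_ev_eq[OF st] s by (auto simp: event_of_def forward_tr_def)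
qed

lemma mem_forward_event_iff:
  "forward_event fwd iota e \<Longrightarrow> valid_tr fwd t \<Longrightarrow> t \<in> e \<longleftrightarrow> fw t \<and> event_of t = e"
  using forward_event_memD mem_event_of by blast

inductive root_history :: "'p \<Rightarrow> ('p,'l) trans set multiset \<Rightarrow> bool" where
  root: "\<not> (\<exists>a Q. fwd Q a P) \<Longrightarrow> root_history P {#}"
| step: "fwd Q a P \<Longrightarrow> root_history Q m
    \<Longrightarrow> root_history P (add_mset (event_of (Tr Q a True P)) m)"

lemma root_history_exists: "\<exists>m. root_history P m"
proof (induction P rule: back_step_induct)
  case (step P)
  show ?case
  proof (cases "\<exists>a Q. fwd Q a P")
    case True
    then obtain a Q where "fwd Q a P" by blast
    with step obtain m where "root_history Q m" by blast
    with \<open>fwd Q a P\<close> show ?thesis using root_history.step by blast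
  qed (use root_history.root in blast)
qed

text \<open>Two different backward steps from P are independent by BTI, so SP closes them into
  a square whose opposite sides are event-equivalent; induction at the two targets and
  their common target S does the rest.\<close>
lemma root_history_unique: "root_history P m1 \<Longrightarrow> root_history P m2 \<Longrightarrow> m1 = m2"
proof (induction P arbitrary: m1 m2 rule: back_step_induct)
  case (step P)
  show ?case
  proof (cases "\<exists>a Q. fwd Q a P")
    case False
    have "m = {#}" if "root_history P m" for m
      using that False by (cases rule: root_history.cases) auto
    then show ?thesis using step.prems by blast
  next
    case True
    from step.prems(1) True obtain Q1 a1 m1' where h1: "fwd Q1 a1 P" "root_history Q1 m1'"
      "m1 = add_mset (event_of (Tr Q1 a1 True P)) m1'" by (auto elim: root_history.cases)
    from step.prems(2) True obtain Q2 a2 m2' where h2: "fwd Q2 a2 P" "root_history Q2 m2'"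
      "m2 = add_mset (event_of (Tr Q2 a2 True P)) m2'" by (auto elim: root_history.cases)
    have IH1: "root_history Q1 m \<Longrightarrow> m1' = m" for m
      using step.IH h1 by blast
    have IH2: "root_history Q2 m \<Longrightarrow> m2' = m" for m
      using step.IH h2 by blast
    show ?thesis
    proof (cases "Q1 = Q2 \<and> a1 = a2")
      case True
      then show ?thesis using IH1 h1 h2 by auto
    next
      case False
      let ?u1 = "Tr P a1 False Q1" and ?u2 = "Tr P a2 False Q2"
      have v: "valid_tr fwd ?u1" "valid_tr fwd ?u2"
        using h1 h2 by (simp_all add: valid_tr_def)
      have i: "iota ?u1 ?u2" using backward_iota[OF v] False by auto
      obtain u' t' where sq: "square fwd ?u1 ?u2 u' t'" using square_exists[OF v _ i] by auto
      define S where "S = tgt u'"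
      have u': "u' = Tr Q1 a2 False S" and t': "t' = Tr Q2 a1 False S"
        using sq trans.collapse[of u'] trans.collapse[of t'] by (auto simp: square_def S_def)
      have f: "fwd S a2 Q1" "fwd S a1 Q2"
        using sq u' t' by (auto simp: square_def valid_tr_def)
      have "event_of (Tr Q1 a1 True P) = event_of (Tr S a1 True Q2)"
        using event_of_ev_eq[OF square_ev_eq[OF sq i]] t' by (simp add: event_of_backward)
      moreover have "event_of (Tr Q2 a2 True P) = event_of (Tr S a2 True Q1)"
        using event_of_ev_eq[OF square_ev_eq_swap[OF sq i]] u' by (simp add: event_of_backward)
      moreover obtain mS where mS: "root_history S mS" using root_history_exists by blast
      ultimately show ?thesis
        using h1 h2 IH1[OF root_history.step[OF f(1) mS]] IH2[OF root_history.step[OF f(2) mS]]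
        by simp
    qed
  qed
qed

definition history :: "'p \<Rightarrow> ('p,'l) trans set multiset" where
  "history P = (THE m. root_history P m)"

lemma history_eq: "root_history P m \<Longrightarrow> history P = m"
  unfolding history_def using root_history_unique by blast

lemma history_root: "\<not> (\<exists>a Q. fwd Q a P) \<Longrightarrow> history P = {#}"
  by (rule history_eq) (rule root_history.root)

lemma history_step: "fwd Q a P \<Longrightarrow> history P = add_mset (event_of (Tr Q a True P)) (history Q)"
  using root_history_exists[of Q] by (auto intro!: history_eq root_history.step simp: history_eq)

lemma history_fw:
  "valid_tr fwd t \<Longrightarrow> fw t \<Longrightarrow> history (tgt t) = add_mset (event_of t) (history (src t))"
  using history_step[of "src t" "lbl t" "tgt t"] trans.collapse[of t] by (auto simp: valid_tr_def)

lemma history_bw: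
  "valid_tr fwd t \<Longrightarrow> \<not> fw t \<Longrightarrow> history (src t) = add_mset (event_of t) (history (tgt t))"
  using history_fw[of "inv_tr t"] by simp

lemma history_mem_back_step:
  assumes "e \<in># history X"
  obtains a Q where "fwd Q a X"
  using assms history_root by fastforce

lemma count_history_other:
  "valid_tr fwd t \<Longrightarrow> event_of t \<noteq> f \<Longrightarrow> count (history (src t)) f = count (history (tgt t)) f"
  by (cases "fw t") (auto simp: history_fw history_bw)

lemma count_ev_step:
  assumes "forward_event fwd iota e" and "valid_tr fwd t"
  shows "(if t \<in> e then 1 else if t \<in> ev_bar e then -1 else 0)
    = int (count (history (tgt t)) e) - int (count (history (src t)) e)"
  using assms mem_forward_event_iff[OF assms] mem_forward_event_iff[OF assms(1), of "inv_tr t"]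
  by (cases "fw t") (auto simp: mem_ev_bar_iff history_fw history_bw)

lemma count_ev_path:
  "is_path fwd r \<Longrightarrow> r \<noteq> [] \<Longrightarrow> forward_event fwd iota e \<Longrightarrow>
    count_ev r e = int (count (history (tgt (last r))) e) - int (count (history (src (hd r))) e)"
proof (induction r)
  case (Cons t r)
  then show ?case
    using count_ev_step[of e t] by (cases r) auto
qed simp

lemma count_ev_rooted_path:
  assumes "rooted_path fwd r" and "r \<noteq> []" and "forward_event fwd iota e"
  shows "count_ev r e = int (count (history (tgt (last r))) e)"
  using assms count_ev_path[of r e] history_root[of "src (hd r)"] by (simp add: rooted_path_def)

lemma rooted_path_to:
  "(\<exists>a Q. fwd Q a X) \<Longrightarrow> \<exists>r. rooted_path fwd r \<and> r \<noteq> [] \<and> tgt (last r) = X"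
proof (induction X rule: back_step_induct)
  case (step X)
  then obtain a Q where f: "fwd Q a X" by blast
  let ?t = "Tr Q a True X"
  have v: "valid_tr fwd ?t" using f by (simp add: valid_tr_def)
  show ?case
  proof (cases "\<exists>a Q'. fwd Q' a Q")
    case False
    then show ?thesis using v by (intro exI[of _ "[?t]"]) (auto simp: rooted_path_def)
  next
    case True
    then obtain r where r: "rooted_path fwd r" "r \<noteq> []" "tgt (last r) = Q"
      using step.IH f by blast
    then have "is_path fwd (r @ [?t])" using is_path_snoc[of fwd r ?t] v by (auto simp: rooted_path_def)
    then show ?thesis using r by (intro exI[of _ "r @ [?t]"]) (auto simp: rooted_path_def)
  qed
qed

definition history_le :: "('p,'l) trans set \<Rightarrow> ('p,'l) trans set \<Rightarrow> bool" where
  "history_le e e' \<longleftrightarrow> (\<forall>X. e' \<in># history X \<longrightarrow> e \<in># history X)"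

lemma ev_le_iff_history_le:
  assumes e: "forward_event fwd iota e" and e': "forward_event fwd iota e'"
  shows "ev_le fwd e e' \<longleftrightarrow> history_le e e'"
proof
  assume le: "ev_le fwd e e'"
  show "history_le e e'"
    unfolding history_le_def
  proof (intro allI impI)
    fix X assume m: "e' \<in># history X"
    then obtain r where r: "rooted_path fwd r" "r \<noteq> []" "tgt (last r) = X"
      using rooted_path_to history_root by (metis empty_iff set_mset_empty)
    then show "e \<in># history X"
      using le m count_ev_rooted_path[OF r(1,2) e] count_ev_rooted_path[OF r(1,2) e']
      unfolding ev_le_def by auto
  qed
next
  assume "history_le e e'"
  then show "ev_le fwd e e'"
    using count_ev_rooted_path e e' by (fastforce simp: ev_le_def history_le_def)
qed

lemma ev_less_iff_history_le:
  "forward_event fwd iota e \<Longrightarrow> forward_event fwd iota e' \<Longrightarrow>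
    ev_less fwd e e' \<longleftrightarrow> history_le e e' \<and> e \<noteq> e'"
  by (simp add: ev_less_def ev_le_iff_history_le)

end

locale ltsi_ire_rpi = pre_reversible_ltsi +
  assumes IRE: "IRE fwd iota" and RPI: "RPI iota"
begin

lemma iota_inv_tr: "iota t u \<Longrightarrow> iota (inv_tr t) u"
  using RPI by (auto simp: RPI_def)

lemma iota_ev_eq: "ev_eq fwd iota t t' \<Longrightarrow> iota t' u \<Longrightarrow> iota t u"
  using IRE by (auto simp: IRE_def)

lemma iota_forward_tr: "iota t u \<Longrightarrow> iota (forward_tr t) (forward_tr u)"
  using iota_inv_tr iota_sym by (auto simp: forward_tr_def)

lemma iota_event_of_neq: "iota t u \<Longrightarrow> event_of u \<noteq> event_of t"
proof
  assume i: "iota t u" and e: "event_of u = event_of t"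
  have "ev_eq fwd iota (forward_tr t) (forward_tr u)"
    using e iota_valid[OF i] by (intro event_of_eqD) auto
  then have "iota (forward_tr t) (forward_tr t)"
    using iota_ev_eq iota_sym iota_forward_tr[OF i] by blast
  then show False using iota_irrefl by blast
qed

text \<open>The side condition says f is not the event of a transition independent of t; IRE
  propagates it along \<open>ev_eq\<close>, and in a square t u u' t' the processes \<open>src t\<close>, \<open>src t'\<close>
  (or \<open>tgt t\<close>, \<open>tgt t'\<close>) differ by a step of the event of u, which is then not f.\<close>
lemma count_history_ev_eq:
  "ev_eq fwd iota t t' \<Longrightarrow> (\<forall>y. iota t y \<longrightarrow> event_of y \<noteq> f) \<Longrightarrow>
    count (history (src (forward_tr t))) f = count (history (src (forward_tr t'))) f"
proof (induction rule: ev_eq.induct)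
  case (ev_sym t u)
  then show ?case using iota_ev_eq ev_eq.ev_sym by metis
next
  case (ev_trans t u v)
  then show ?case using iota_ev_eq ev_eq.ev_sym by metis
next
  case (ev_square t u u' t')
  have "event_of u \<noteq> f" using ev_square by blast
  moreover have "event_of u' = event_of u"
    using event_of_ev_eq[OF square_ev_eq_swap[OF ev_square(1,2)]] by simp
  ultimately show ?case
    using ev_square(1) count_history_other[of u f] count_history_other[of u' f]
    by (cases "fw t") (auto simp: forward_tr_def square_def)
qed simp

lemma history_count_witness:
  "k < count (history X) e \<Longrightarrow>
    \<exists>t. valid_tr fwd t \<and> fw t \<and> event_of t = e \<and> count (history (src t)) e = k"
proof (induction X arbitrary: k rule: back_step_induct)
  case (step X)
  from step.prems have "e \<in># history X" by (metis count_inI less_nat_zero_code)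
  then obtain a Q where f: "fwd Q a X" by (rule history_mem_back_step)
  let ?t = "Tr Q a True X"
  have v: "valid_tr fwd ?t" using f by (simp add: valid_tr_def)
  have hX: "history X = add_mset (event_of ?t) (history Q)" using history_fw[OF v] by simp
  show ?case
  proof (cases "event_of ?t = e \<and> k = count (history Q) e")
    case True
    then show ?thesis using v by (intro exI[of _ ?t]) simp
  next
    case False
    then have "k < count (history Q) e" using step.prems hX by (auto split: if_splits)
    then show ?thesis using step.IH f by blast
  qed
qed

text \<open>Two transitions of e at which e has been done 0 and 1 times would be
  event-equivalent, contradicting the invariance of that count.\<close>
lemma count_history_le_1: "count (history X) e \<le> 1"
proof (rule ccontr)
  assume "\<not> count (history X) e \<le> 1"
  then have c: "1 < count (history X) e" by simp
  then have "0 < count (history X) e" by linarith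
  then obtain t0 where t0: "valid_tr fwd t0" "fw t0" "event_of t0 = e"
      "count (history (src t0)) e = 0"
    using history_count_witness by blast
  obtain t1 where t1: "valid_tr fwd t1" "fw t1" "event_of t1 = e" "count (history (src t1)) e = 1"
    using history_count_witness[OF c] by blast
  have "ev_eq fwd iota t0 t1" using t0 t1 by (intro event_of_eqD) simp_all
  moreover have "\<forall>y. iota t0 y \<longrightarrow> event_of y \<noteq> e" using iota_event_of_neq t0(3) by blast
  ultimately have "count (history (src (forward_tr t0))) e = count (history (src (forward_tr t1))) e"
    by (rule count_history_ev_eq)
  then show False using t0 t1 by (simp add: forward_tr_def)
qed

lemma event_of_not_in_history_src:
  assumes "valid_tr fwd t" and "fw t"
  shows "event_of t \<notin># history (src t)"
  using count_history_le_1[of "tgt t" "event_of t"] history_fw[OF assms]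
  by (simp add: count_eq_zero_iff)

lemma history_mem_witness:
  "e \<in># history X \<Longrightarrow>
    \<exists>t. valid_tr fwd t \<and> fw t \<and> event_of t = e \<and> history (tgt t) \<subseteq># history X"
proof (induction X rule: back_step_induct)
  case (step X)
  from step.prems obtain a Q where f: "fwd Q a X" by (rule history_mem_back_step)
  let ?t = "Tr Q a True X"
  have v: "valid_tr fwd ?t" using f by (simp add: valid_tr_def)
  have hX: "history X = add_mset (event_of ?t) (history Q)" using history_fw[OF v] by simp
  show ?case
  proof (cases "event_of ?t = e")
    case True
    then show ?thesis using v by (intro exI[of _ ?t]) simp
  next
    case False
    then have "e \<in># history Q" using step.prems hX by simp
    then obtain t where "valid_tr fwd t \<and> fw t \<and> event_of t = e \<and> history (tgt t) \<subseteq># history Q"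
      using step.IH[OF f] by blast
    moreover have "history Q \<subseteq># history X" using hX by simp
    ultimately show ?thesis using subset_mset.order_trans by blast
  qed
qed

text \<open>Take a transition t of \<open>event_of t2\<close> below X. The count of \<open>event_of t1\<close> is the
  same at \<open>src t\<close> as at \<open>src t2\<close>, where it is 1: no transition independent of t2 has
  the event of t1, since by IRE and RPI it would make \<open>inv_tr t1\<close> independent of t2.\<close>
lemma history_mem_composable:
  assumes t1: "valid_tr fwd t1" "fw t1" and t2: "valid_tr fwd t2" "fw t2"
    and comp: "tgt t1 = src t2" and not_indep: "\<not> iota (inv_tr t1) t2"
    and mem: "event_of t2 \<in># history X"
  shows "event_of t1 \<in># history X"
proof -
  obtain t where t: "valid_tr fwd t" "fw t" "event_of t = event_of t2"
    "history (tgt t) \<subseteq># history X"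
    using history_mem_witness[OF mem] by blast
  have "\<forall>y. iota t2 y \<longrightarrow> event_of y \<noteq> event_of t1"
  proof (intro allI impI notI)
    fix y assume i: "iota t2 y" and ey: "event_of y = event_of t1"
    have "ev_eq fwd iota t1 (forward_tr y)"
      using ey t1 iota_valid[OF i] by (intro event_of_eqD) auto
    moreover have "iota (forward_tr y) t2"
      using iota_sym iota_forward_tr[OF i] t2 by (simp add: forward_tr_def)
    ultimately show False using iota_ev_eq iota_inv_tr not_indep by blast
  qed
  then have "count (history (src t2)) (event_of t1) = count (history (src t)) (event_of t1)"
    using count_history_ev_eq[OF event_of_eqD[OF t(3)[symmetric] t2(2) t(2,1)]] t(2) t2(2)
    by (simp add: forward_tr_def)
  moreover have "event_of t1 \<in># history (src t2)" using history_fw[OF t1] comp by simp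
  ultimately have "event_of t1 \<in># history (src t)" by (metis count_greater_zero_iff)
  then show ?thesis using history_fw[OF t(1,2)] t(4) by (auto dest: mset_subset_eqD)
qed

lemma history_le_composable:
  "valid_tr fwd t1 \<Longrightarrow> fw t1 \<Longrightarrow> valid_tr fwd t2 \<Longrightarrow> fw t2 \<Longrightarrow> tgt t1 = src t2
    \<Longrightarrow> \<not> iota (inv_tr t1) t2 \<Longrightarrow> history_le (event_of t1) (event_of t2)"
  using history_mem_composable by (simp add: history_le_def)

text \<open>Descend to the step undoing e; at each step either SP lifts the backward transition
  found below by one square, or the step just taken is causally above it.\<close>
lemma history_mem_backward_step:
  "e \<in># history Y \<Longrightarrow>
    \<exists>v. valid_tr fwd v \<and> \<not> fw v \<and> src v = Y \<and> history_le e (event_of v)"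
proof (induction Y rule: back_step_induct)
  case (step Y)
  from step.prems obtain a Q where f: "fwd Q a Y" by (rule history_mem_back_step)
  let ?v = "Tr Y a False Q"
  have v: "valid_tr fwd ?v" using f by (simp add: valid_tr_def)
  have hY: "history Y = add_mset (event_of ?v) (history Q)" using history_bw[OF v] by simp
  show ?case
  proof (cases "event_of ?v = e")
    case True
    then show ?thesis using v by (intro exI[of _ ?v]) (simp add: history_le_def)
  next
    case False
    then have "e \<in># history Q" using step.prems hY by simp
    then obtain w where w: "valid_tr fwd w" "\<not> fw w" "src w = Q" "history_le e (event_of w)"
      using step.IH[OF f] by blast
    show ?thesis
    proof (cases "iota w (inv_tr ?v)")
      case True
      then obtain u' t' where sq: "square fwd (inv_tr ?v) w u' t'"
        using square_exists[of "inv_tr ?v" w] v w iota_sym by auto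
      have "event_of u' = event_of w"
        using event_of_ev_eq[OF square_ev_eq_swap[OF sq iota_sym[OF True]]] by simp
      moreover have "valid_tr fwd u'" "\<not> fw u'" "src u' = Y" using sq w by (auto simp: square_def)
      ultimately show ?thesis using w(4) by metis
    next
      case False
      then have "history_le (event_of w) (event_of ?v)"
        using history_le_composable[of "inv_tr w" "inv_tr ?v"] v w by simp
      then show ?thesis using v w(4) by (intro exI[of _ ?v]) (auto simp: history_le_def)
    qed
  qed
qed

lemma ev_prec_iff_history_le:
  assumes "forward_event fwd iota e1" and "forward_event fwd iota e2"
  shows "ev_prec fwd iota e1 e2 \<longleftrightarrow> history_le e1 e2 \<and> e1 \<noteq> e2 \<and>
    (\<forall>e. forward_event fwd iota e \<longrightarrow> history_le e1 e \<longrightarrow> history_le e e2 \<longrightarrow> e = e1 \<or> e = e2)"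
  unfolding ev_prec_def using assms by (metis ev_less_iff_history_le)

lemma ev_prec_not_core_indep:
  assumes e1: "forward_event fwd iota e1" and e2: "forward_event fwd iota e2"
    and prec: "ev_prec fwd iota e1 e2"
  shows "\<not> core_indep iota e1 e2"
proof
  assume "core_indep iota e1 e2"
  then obtain t t' where "t \<in> e1" "t' \<in> e2" and src: "src t = src t'" "iota t t'"
    by (auto simp: core_indep_def)
  then have t: "valid_tr fwd t" "fw t" "event_of t = e1"
    and t': "valid_tr fwd t'" "fw t'" "event_of t' = e2"
    using forward_event_memD e1 e2 by blast+
  have le: "history_le e1 e2" and ne: "e1 \<noteq> e2"
    using prec ev_prec_iff_history_le[OF e1 e2] by blast+
  have "e2 \<in># history (tgt t')" using history_fw[OF t'(1,2)] t'(3) by simp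
  then have "e1 \<in># history (tgt t')" using le unfolding history_le_def by blast
  then have "e1 \<in># history (src t)"
    using ne history_fw[OF t'(1,2)] t'(3) src(1) by simp
  then show False using event_of_not_in_history_src[OF t(1,2)] t(3) by simp
qed

text \<open>Induction on the source of a transition t2 of e2: as \<open>e1 \<in># history (src t2)\<close>,
  there is a backward step v from \<open>src t2\<close> above e1. Either v undoes e1, or v is
  independent of t2 and the square gives a transition of e2 one step lower, or v's event
  lies strictly between e1 and e2.\<close>
lemma ev_prec_composable:
  assumes e1: "forward_event fwd iota e1" and e2: "forward_event fwd iota e2"
    and prec: "ev_prec fwd iota e1 e2"
    and t2: "valid_tr fwd t2" "fw t2" "event_of t2 = e2"
  shows "ev_composable e1 e2"
  using t2
proof (induction "src t2" arbitrary: t2 rule: back_step_induct)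
  case step
  have le: "history_le e1 e2" and ne: "e1 \<noteq> e2" and no_between:
    "\<And>e. forward_event fwd iota e \<Longrightarrow> history_le e1 e \<Longrightarrow> history_le e e2 \<Longrightarrow> e = e1 \<or> e = e2"
    using prec ev_prec_iff_history_le[OF e1 e2] by blast+
  have h2: "history (tgt t2) = add_mset e2 (history (src t2))"
    using history_fw step.prems by auto
  then have "e2 \<in># history (tgt t2)" by simp
  then have "e1 \<in># history (tgt t2)" using le unfolding history_le_def by blast
  then have "e1 \<in># history (src t2)" using h2 ne by simp
  then obtain v where v: "valid_tr fwd v" "\<not> fw v" "src v = src t2" "history_le e1 (event_of v)"
    using history_mem_backward_step by blast
  consider "event_of v = e1" | "iota v t2" | "event_of v \<noteq> e1" "\<not> iota v t2" by blast
  then show ?case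
  proof cases
    case 1
    then have "inv_tr v \<in> e1" "t2 \<in> e2"
      using mem_event_of[of "inv_tr v"] mem_event_of[of t2] v step.prems by auto
    then show ?thesis using v(3) unfolding ev_composable_def by force
  next
    case 2
    then obtain u' t' where sq: "square fwd v t2 t' u'"
      using square_exists v step.prems by blast
    have "event_of t' = e2" using event_of_ev_eq[OF square_ev_eq_swap[OF sq 2]] step.prems by simp
    moreover have "valid_tr fwd t'" "fw t'" "src t' = tgt v"
      using sq step.prems by (auto simp: square_def)
    moreover have "fwd (tgt v) (lbl v) (src t2)" using v by (simp add: valid_tr_def)
    ultimately show ?thesis using step.hyps[of t' "lbl v"] by simp
  next
    case 3
    have "history_le (event_of v) e2"
      using history_le_composable[of "inv_tr v" t2] v step.prems 3(2) by simp
    moreover have "event_of v \<noteq> e2"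
      using event_of_not_in_history_src[OF step.prems(1,2)] history_bw[OF v(1,2)] v(3) step.prems
      by auto
    ultimately show ?thesis
      using no_between[OF forward_event_event_of[OF v(1)] v(4)] 3(1) by blast
  qed
qed

lemma composable_not_core_indep_ev_prec:
  assumes e1: "forward_event fwd iota e1" and e2: "forward_event fwd iota e2"
    and comp: "ev_composable e1 e2" and not_indep: "\<not> core_indep iota e1 e2"
  shows "ev_prec fwd iota e1 e2"
proof -
  obtain t1 t2 where "t1 \<in> e1" "t2 \<in> e2" and comp: "tgt t1 = src t2"
    using comp by (auto simp: ev_composable_def)
  then have t1: "valid_tr fwd t1" "fw t1" "event_of t1 = e1"
    and t2: "valid_tr fwd t2" "fw t2" "event_of t2 = e2"
    using forward_event_memD e1 e2 by blast+
  have "\<not> iota (inv_tr t1) t2"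
  proof
    assume i: "iota (inv_tr t1) t2"
    then obtain u' t' where sq: "square fwd (inv_tr t1) t2 t' u'"
      using square_exists[of "inv_tr t1" t2] t1 t2 comp by auto
    have e: "ev_eq fwd iota t2 t'" using square_ev_eq_swap[OF sq i] .
    have "valid_tr fwd t'" "fw t'" "src t' = src t1" using sq t2 by (auto simp: square_def)
    then have "t' \<in> e2" using mem_event_of event_of_ev_eq[OF e] t2 by force
    moreover have "iota t1 t'"
      using iota_ev_eq[OF ev_eq.ev_sym[OF e]] iota_sym iota_inv_tr[OF i] by force
    ultimately show False
      using not_indep \<open>t1 \<in> e1\<close> \<open>src t' = src t1\<close> by (auto simp: core_indep_def)
  qed
  then have le: "history_le e1 e2" using history_le_composable t1 t2 comp by blast
  have h1: "history (tgt t1) = add_mset e1 (history (src t1))" using history_fw t1 by auto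
  have h2: "history (tgt t2) = add_mset e2 (history (tgt t1))" using history_fw t2 comp by auto
  have "e1 \<notin># history (src t1)" using event_of_not_in_history_src t1 by blast
  moreover have "e1 \<noteq> e2" using event_of_not_in_history_src[OF t2(1,2)] h1 t2(3) comp by auto
  moreover have "e = e1 \<or> e = e2" if "history_le e1 e" "history_le e e2" for e
  proof (rule ccontr)
    assume "\<not> (e = e1 \<or> e = e2)"
    moreover have "e2 \<in># history (tgt t2)" using h2 by simp
    then have "e \<in># history (tgt t2)" using that(2) unfolding history_le_def by blast
    ultimately have "e \<in># history (src t1)" using h1 h2 by simp
    then have "e1 \<in># history (src t1)" using that(1) unfolding history_le_def by blast
    then show False using \<open>e1 \<notin># history (src t1)\<close> by contradiction
  qed
  ultimately show ?thesis using le ev_prec_iff_history_le[OF e1 e2] by blast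
qed

end

theorem lemma5p10:
  fixes fwd :: "'p \<Rightarrow> 'l \<Rightarrow> 'p \<Rightarrow> bool"
    and iota :: "('p,'l) trans \<Rightarrow> ('p,'l) trans \<Rightarrow> bool"
  assumes "pre_reversible fwd iota" and "IRE fwd iota" and "RPI iota"
    and "forward_event fwd iota e1" and "forward_event fwd iota e2"
  shows "ev_prec fwd iota e1 e2 \<longleftrightarrow> ev_composable e1 e2 \<and> \<not> core_indep iota e1 e2"
proof -
  interpret ltsi_ire_rpi fwd iota
    using assms(1-3) by unfold_locales
  obtain t2 where "valid_tr fwd t2" "fw t2" "event_of t2 = e2"
    using assms(5) by (rule forward_eventE)
  then show ?thesis
    using ev_prec_not_core_indep ev_prec_composable composable_not_core_indep_ev_prec assms(4,5)
    by blast
qed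

end
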